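(* There is a constant $C$ such that for every two NFAs $A$ and $B$, each with at most $n$ states and over a common alphabet of $m$ input letters, there exist two DFAs $A'$ and $B'$ with at most $C mn$ states and over an alphabet of at most $C mn$ letters such that, for every $r\ge 1$, there is a tower of height $r$ between $L(A)$ and $L(B)$ if and only if there is a tower of height $r$ between $L(A')$ and $L(B')$. In particular, there is an infinite tower between $L(A)$ and $L(B)$ if and only if there is an infinite tower between $L(A')$ and $L(B')$.
   Context: For strings $v=a_1\cdots a_k$ and $w$, $v\preccurlyeq w$ if $w\in\Sigma^*a_1\Sigma^*a_2\Sigma^*\cdots\Sigma^*a_k\Sigma^*$. A sequence $(w_i)_{i=1}^r$ of strings is a tower between languages $K$ and $L$ if $w_1\in K\cup L$ and for all $i=1,\dots,r-1$: $w_i\preccurlyeq w_{i+1}$, $w_i\in K$ implies $w_{i+1}\in L$, and $w_i\in L$ implies $w_{i+1}\in K$; $r$ is its height. An infinite tower is an infinite sequence with the same properties. *)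

theory Defs
  imports Main "HOL-Library.Sublist"
begin

record ('s, 'a) nfa =
  states   :: "'s set"
  alphabet :: "'a set"
  trans    :: "('s \<times> 'a \<times> 's) set"
  init     :: "'s set"
  final    :: "'s set"

definition wf_nfa :: "('s, 'a) nfa \<Rightarrow> bool" where
  "wf_nfa A \<longleftrightarrow> finite (states A) \<and> finite (alphabet A)
     \<and> init A \<subseteq> states A \<and> final A \<subseteq> states A
     \<and> trans A \<subseteq> states A \<times> alphabet A \<times> states A"

text \<open>A (possibly partial) DFA: a well-formed NFA with exactly one initial
  state and at most one successor per state and letter.\<close>
definition is_dfa :: "('s, 'a) nfa \<Rightarrow> bool" where
  "is_dfa A \<longleftrightarrow> wf_nfa A \<and> (\<exists>q. init A = {q})
     \<and> (\<forall>p a q q'. (p, a, q) \<in> trans A \<longrightarrow> (p, a, q') \<in> trans A \<longrightarrow> q = q')"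

fun reach :: "('s \<times> 'a \<times> 's) set \<Rightarrow> 's \<Rightarrow> 'a list \<Rightarrow> 's \<Rightarrow> bool" where
  "reach T p [] q \<longleftrightarrow> p = q"
| "reach T p (a # w) q \<longleftrightarrow> (\<exists>p'. (p, a, p') \<in> T \<and> reach T p' w q)"

definition lang :: "('s, 'a) nfa \<Rightarrow> 'a list set" where
  "lang A = {w. set w \<subseteq> alphabet A \<and>
              (\<exists>p \<in> init A. \<exists>q \<in> final A. reach (trans A) p w q)}"

text \<open>Towers: the subword order is the library's subseq (scattered subword).
  A finite tower is a nonempty list of words; its height is its length.\<close>
definition is_tower :: "'a list set \<Rightarrow> 'a list set \<Rightarrow> 'a list list \<Rightarrow> bool" where
  "is_tower K L ws \<longleftrightarrow> ws \<noteq> [] \<and> hd ws \<in> K \<union> L \<and>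
     (\<forall>i. Suc i < length ws \<longrightarrow>
        subseq (ws ! i) (ws ! Suc i) \<and>
        (ws ! i \<in> K \<longrightarrow> ws ! Suc i \<in> L) \<and>
        (ws ! i \<in> L \<longrightarrow> ws ! Suc i \<in> K))"

definition is_infinite_tower :: "'a list set \<Rightarrow> 'a list set \<Rightarrow> (nat \<Rightarrow> 'a list) \<Rightarrow> bool" where
  "is_infinite_tower K L w \<longleftrightarrow> w 0 \<in> K \<union> L \<and>
     (\<forall>i. subseq (w i) (w (Suc i)) \<and>
        (w i \<in> K \<longrightarrow> w (Suc i) \<in> L) \<and>
        (w i \<in> L \<longrightarrow> w (Suc i) \<in> K))"

end

theory Submission
  imports Defs "HOL-Library.Countable"
begin

text \<open>Encode an input letter \<open>a\<close> as \<open>2a\<close> and a state \<open>q\<close> as \<open>2q + 1\<close>. The DFA for an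
  NFA \<open>M\<close> reads a run of \<open>M\<close> spelled as \<open>2p\<^sub>0 + 1\<close> followed by \<open>2a, 2q + 1\<close> for each
  transition \<open>(p, a, q)\<close>, and while sitting in a state it skips all odd letters; it is
  deterministic because every transition names its target. Erasing the odd letters and halving
  (\<open>decode\<close>) maps its language onto \<open>L(M)\<close> and is monotone for the subword order; conversely
  every word of \<open>L(M)\<close> lifts to an accepted word lying above any prescribed word whose decoding
  is a subword of it, since the odd letters of the prescribed word can be absorbed by the skipping
  loops. Thus chains that alternate between \<open>L(A)\<close> and \<open>L(B)\<close> lift, position by position,
  to chains alternating between the two DFA languages, and decode back. Towers of height \<open>r\<close>
  exist exactly when such alternating chains of length \<open>r\<close> do: if the two languages meet, a
  constant word is a tower of every height, and otherwise alternating chains are towers.\<close>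

section \<open>Towers and alternating chains\<close>

definition side :: "'a set \<Rightarrow> 'a set \<Rightarrow> bool \<Rightarrow> nat \<Rightarrow> 'a set" where
  "side K L b i = (if even i = b then K else L)"

text \<open>Unlike a tower, an alternating chain fixes in advance which language each position
  lies in (by its parity); this is what allows it to be lifted one position at a time.\<close>

definition alternating :: "'a list set \<Rightarrow> 'a list set \<Rightarrow> bool \<Rightarrow> (nat \<Rightarrow> 'a list) \<Rightarrow> nat \<Rightarrow> bool" where
  "alternating K L b w r \<longleftrightarrow>
     (\<forall>i<r. w i \<in> side K L b i) \<and> (\<forall>i. Suc i < r \<longrightarrow> subseq (w i) (w (Suc i)))"

definition tower_prefix :: "'a list set \<Rightarrow> 'a list set \<Rightarrow> (nat \<Rightarrow> 'a list) \<Rightarrow> nat \<Rightarrow> bool" where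
  "tower_prefix K L w r \<longleftrightarrow> w 0 \<in> K \<union> L \<and>
     (\<forall>i. Suc i < r \<longrightarrow> subseq (w i) (w (Suc i)) \<and>
        (w i \<in> K \<longrightarrow> w (Suc i) \<in> L) \<and> (w i \<in> L \<longrightarrow> w (Suc i) \<in> K))"

lemma is_tower_iff_tower_prefix:
  "is_tower K L ws \<longleftrightarrow> ws \<noteq> [] \<and> tower_prefix K L ((!) ws) (length ws)"
  by (auto simp: is_tower_def tower_prefix_def hd_conv_nth)

lemma is_infinite_tower_iff_tower_prefix:
  "is_infinite_tower K L w \<longleftrightarrow> (\<forall>r. tower_prefix K L w r)"
  unfolding is_infinite_tower_def tower_prefix_def by (metis lessI)

lemma tower_prefix_map_upt:
  "tower_prefix K L ((!) (map w [0..<r])) r \<longleftrightarrow> tower_prefix K L w r" if "0 < r"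
  using that by (auto simp: tower_prefix_def simp del: upt_Suc)

lemma tower_prefix_const: "x \<in> K \<inter> L \<Longrightarrow> tower_prefix K L (\<lambda>_. x) r"
  by (simp add: tower_prefix_def)

lemma tower_prefix_imp_alternating:
  assumes "tower_prefix K L w r"
  shows "alternating K L (w 0 \<in> K) w r"
proof -
  have "w i \<in> side K L (w 0 \<in> K) i" if "i < r" for i
    using that
  proof (induction i)
    case 0
    then show ?case using assms by (auto simp: side_def tower_prefix_def)
  next
    case (Suc i)
    then have "w i \<in> side K L (w 0 \<in> K) i" by simp
    then show ?case using assms Suc.prems by (auto simp: side_def tower_prefix_def split: if_splits)
  qed
  then show ?thesis using assms by (simp add: alternating_def tower_prefix_def)
qed

lemma alternating_imp_tower_prefix:
  assumes "alternating K L b w r" "K \<inter> L = {}" "0 < r"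
  shows "tower_prefix K L w r"
proof -
  have "(w i \<in> K \<longrightarrow> w (Suc i) \<in> L) \<and> (w i \<in> L \<longrightarrow> w (Suc i) \<in> K)" if "Suc i < r" for i
  proof -
    have "w i \<in> side K L b i" "w (Suc i) \<in> side K L b (Suc i)"
      using assms(1) that by (auto simp: alternating_def)
    then show ?thesis using assms(2) by (auto simp: side_def split: if_splits)
  qed
  moreover have "w 0 \<in> side K L b 0" using assms(1,3) by (simp add: alternating_def)
  ultimately show ?thesis using assms(1) by (auto simp: tower_prefix_def alternating_def side_def split: if_splits)
qed

lemma ex_tower_iff_alternating:
  "(\<exists>ws. is_tower K L ws \<and> length ws = r) \<longleftrightarrow> 0 < r \<and> (\<exists>b w. alternating K L b w r)"
proof
  assume "\<exists>ws. is_tower K L ws \<and> length ws = r"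
  then show "0 < r \<and> (\<exists>b w. alternating K L b w r)"
    by (auto simp: is_tower_iff_tower_prefix dest: tower_prefix_imp_alternating)
next
  assume "0 < r \<and> (\<exists>b w. alternating K L b w r)"
  then obtain b w where r: "0 < r" and w: "alternating K L b w r" by blast
  obtain w' where "tower_prefix K L w' r"
    using alternating_imp_tower_prefix[OF w _ r] tower_prefix_const by blast
  then have "is_tower K L (map w' [0..<r])"
    using r by (simp add: is_tower_iff_tower_prefix tower_prefix_map_upt)
  then show "\<exists>ws. is_tower K L ws \<and> length ws = r" by (metis length_map length_upt minus_nat.diff_0)
qed

lemma ex_infinite_tower_iff_alternating:
  "(\<exists>w. is_infinite_tower K L w) \<longleftrightarrow> (\<exists>b w. \<forall>r. alternating K L b w r)"
proof
  assume "\<exists>w. is_infinite_tower K L w"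
  then show "\<exists>b w. \<forall>r. alternating K L b w r"
    by (auto simp: is_infinite_tower_iff_tower_prefix dest: tower_prefix_imp_alternating)
next
  assume "\<exists>b w. \<forall>r. alternating K L b w r"
  then obtain b w where w: "\<And>r. alternating K L b w r" by blast
  show "\<exists>w. is_infinite_tower K L w"
  proof (cases "K \<inter> L = {}")
    case True
    then have "tower_prefix K L w r" for r
      using alternating_imp_tower_prefix[OF w True, of "Suc r"] by (auto simp: tower_prefix_def)
    then show ?thesis by (auto simp: is_infinite_tower_iff_tower_prefix)
  next
    case False
    then obtain x where "x \<in> K \<inter> L" by blast
    then show ?thesis by (metis is_infinite_tower_iff_tower_prefix tower_prefix_const)
  qed
qed

section \<open>Lifting chains along the decoding map\<close>

definition decode :: "nat list \<Rightarrow> nat list" where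
  "decode w = map (\<lambda>x. x div 2) (filter even w)"

lemma decode_simps [simp]:
  "decode [] = []"
  "decode (x # w) = (if even x then x div 2 # decode w else decode w)"
  "decode (u @ v) = decode u @ decode v"
  by (simp_all add: decode_def)

lemma decode_Nil_iff: "decode w = [] \<longleftrightarrow> (\<forall>x\<in>set w. odd x)"
  by (auto simp: decode_def filter_empty_conv)

lemma subseq_decode: "subseq u w \<Longrightarrow> subseq (decode u) (decode w)"
  unfolding decode_def by (intro subseq_map subseq_filter)

lemma subseq_decode_Cons:
  assumes "subseq (decode u) (b # v)"
  obtains S r where "subseq u (S @ 2 * b # r)" "\<forall>x\<in>set S. odd x"
    "set S \<subseteq> set u" "set r \<subseteq> set u" "subseq (decode r) v"
proof (cases "\<exists>ys. filter even u = 2 * b # ys")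
  case True
  then obtain S r where "u = S @ 2 * b # r" "\<forall>x\<in>set S. odd x" "subseq (decode r) v"
    using assms by (auto simp: filter_eq_Cons_iff decode_def)
  then show ?thesis by (intro that) auto
next
  case False
  have "subseq (decode u) v"
  proof (cases "filter even u")
    case Nil
    then show ?thesis by (simp add: decode_def)
  next
    case (Cons a ys)
    then have "even a" by (metis filter_eq_ConsD)
    then have "a div 2 \<noteq> b" using False Cons by auto
    then show ?thesis using assms Cons by (simp add: decode_def subseq_Cons2_neq)
  qed
  then show ?thesis by (intro that[of "[]" u]) auto
qed

definition decode_lifting :: "nat set \<Rightarrow> nat list set \<Rightarrow> nat list set \<Rightarrow> bool" where
  "decode_lifting G K' K \<longleftrightarrow> K' \<subseteq> lists G \<and> decode ` K' \<subseteq> K \<and>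
     (\<forall>v\<in>K. \<forall>u\<in>lists G. subseq (decode u) v \<longrightarrow> (\<exists>v'\<in>K'. subseq u v' \<and> decode v' = v))"

lemma decode_lifting_side:
  "decode_lifting G K' K \<Longrightarrow> decode_lifting G L' L \<Longrightarrow> decode_lifting G (side K' L' b i) (side K L b i)"
  by (simp add: side_def)

primrec lift :: "(nat \<Rightarrow> nat list set) \<Rightarrow> (nat \<Rightarrow> nat list) \<Rightarrow> nat \<Rightarrow> nat list" where
  "lift X w 0 = (SOME v. v \<in> X 0 \<and> decode v = w 0)"
| "lift X w (Suc i) = (SOME v. v \<in> X (Suc i) \<and> subseq (lift X w i) v \<and> decode v = w (Suc i))"

lemma lift_0:
  assumes "decode_lifting G (X 0) (Y 0)" "w 0 \<in> Y 0"
  shows "lift X w 0 \<in> X 0 \<and> decode (lift X w 0) = w 0"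
proof -
  have "\<forall>u\<in>lists G. subseq (decode u) (w 0) \<longrightarrow> (\<exists>v'\<in>X 0. subseq u v' \<and> decode v' = w 0)"
    using assms by (simp add: decode_lifting_def)
  then have "\<exists>v. v \<in> X 0 \<and> decode v = w 0"
    by (metis lists.Nil decode_simps(1) list_emb_Nil)
  then show ?thesis unfolding lift.simps by (rule someI_ex)
qed

lemma lift_Suc:
  assumes "decode_lifting G (X (Suc i)) (Y (Suc i))" "w (Suc i) \<in> Y (Suc i)"
    and "lift X w i \<in> lists G" "subseq (decode (lift X w i)) (w (Suc i))"
  shows "lift X w (Suc i) \<in> X (Suc i) \<and> subseq (lift X w i) (lift X w (Suc i))
    \<and> decode (lift X w (Suc i)) = w (Suc i)"
proof -
  have "\<forall>v\<in>Y (Suc i). \<forall>u\<in>lists G. subseq (decode u) v \<longrightarrow>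
      (\<exists>v'\<in>X (Suc i). subseq u v' \<and> decode v' = v)"
    using assms(1) by (simp add: decode_lifting_def)
  then have "\<exists>v. v \<in> X (Suc i) \<and> subseq (lift X w i) v \<and> decode v = w (Suc i)"
    using assms(2-4) by blast
  then show ?thesis unfolding lift.simps by (rule someI_ex)
qed

lemma lift_correct:
  assumes lifting: "\<And>i. decode_lifting G (X i) (Y i)"
    and mem: "\<forall>i<r. w i \<in> Y i" and chain: "\<forall>i. Suc i < r \<longrightarrow> subseq (w i) (w (Suc i))"
  shows "k < r \<Longrightarrow> lift X w k \<in> X k \<and> decode (lift X w k) = w k"
    and "Suc k < r \<Longrightarrow> subseq (lift X w k) (lift X w (Suc k))"
proof -
  have X_lists: "X i \<subseteq> lists G" for i using lifting by (simp add: decode_lifting_def)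
  have lifted: "lift X w k \<in> X k \<and> decode (lift X w k) = w k" if "k < r" for k
    using that
  proof (induction k)
    case 0
    then show ?case using lift_0 lifting mem by blast
  next
    case (Suc k)
    then have "lift X w k \<in> X k" "decode (lift X w k) = w k" by simp_all
    then show ?case
      using lift_Suc[where X = X and Y = Y and w = w and i = k, OF lifting] X_lists mem chain Suc.prems
      by auto
  qed
  then show "k < r \<Longrightarrow> lift X w k \<in> X k \<and> decode (lift X w k) = w k" .
  show "subseq (lift X w k) (lift X w (Suc k))" if "Suc k < r"
    using lifted[of k] lift_Suc[where X = X and Y = Y and w = w and i = k, OF lifting]
      X_lists mem chain that
    by auto
qed

context
  fixes G :: "nat set" and K L K' L' :: "nat list set"
  assumes lifting_K: "decode_lifting G K' K" and lifting_L: "decode_lifting G L' L"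
begin

lemma alternating_decode: "alternating K' L' b w r \<Longrightarrow> alternating K L b (decode \<circ> w) r"
  using decode_lifting_side[OF lifting_K lifting_L]
  by (fastforce simp: alternating_def decode_lifting_def subseq_decode)

lemma alternating_lift:
  assumes "alternating K L b w r"
  shows "alternating K' L' b (lift (side K' L' b) w) r"
proof -
  have lifting: "decode_lifting G (side K' L' b i) (side K L b i)" for i
    using decode_lifting_side[OF lifting_K lifting_L] .
  have mem: "\<forall>i<r. w i \<in> side K L b i" and chain: "\<forall>i. Suc i < r \<longrightarrow> subseq (w i) (w (Suc i))"
    using assms by (simp_all add: alternating_def)
  show ?thesis using lift_correct[OF lifting mem chain] by (simp add: alternating_def)
qed

lemma ex_tower_iff_decode_lifting:
  "(\<exists>ws. is_tower K L ws \<and> length ws = r) \<longleftrightarrow> (\<exists>ws. is_tower K' L' ws \<and> length ws = r)"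
  unfolding ex_tower_iff_alternating using alternating_decode alternating_lift by blast

lemma ex_infinite_tower_iff_decode_lifting:
  "(\<exists>w. is_infinite_tower K L w) \<longleftrightarrow> (\<exists>w. is_infinite_tower K' L' w)"
  unfolding ex_infinite_tower_iff_alternating using alternating_decode alternating_lift by blast

end

lemma reach_append: "reach T p (u @ v) q \<longleftrightarrow> (\<exists>r. reach T p u r \<and> reach T r v q)"
  by (induction u arbitrary: p) auto

lemma reach_letters: "reach T p w q \<Longrightarrow> T \<subseteq> UNIV \<times> A \<times> UNIV \<Longrightarrow> set w \<subseteq> A"
  by (induction w arbitrary: p) auto

definition rename_states :: "('s \<Rightarrow> 't) \<Rightarrow> ('s, 'a) nfa \<Rightarrow> ('t, 'a) nfa" where
  "rename_states f M = \<lparr>states = f ` states M, alphabet = alphabet M,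
     trans = (\<lambda>(p, a, q). (f p, a, f q)) ` trans M, init = f ` init M, final = f ` final M\<rparr>"

lemma reach_rename_states:
  assumes "inj f"
  shows "reach ((\<lambda>(p, a, q). (f p, a, f q)) ` T) (f p) w (f q) \<longleftrightarrow> reach T p w q"
proof (induction w arbitrary: p)
  case Nil
  then show ?case using assms by (simp add: inj_eq)
next
  case (Cons a w)
  have "(f p, a, s) \<in> (\<lambda>(p, a, q). (f p, a, f q)) ` T \<longleftrightarrow> (\<exists>p'. s = f p' \<and> (p, a, p') \<in> T)" for s
    using assms by (force simp: inj_eq)
  then show ?case using Cons.IH by auto
qed

lemma lang_rename_states: "inj f \<Longrightarrow> lang (rename_states f M) = lang M"
  by (auto simp: lang_def rename_states_def reach_rename_states)

lemma is_dfa_rename_states: "inj f \<Longrightarrow> is_dfa M \<Longrightarrow> is_dfa (rename_states f M)"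
  by (auto simp: is_dfa_def wf_nfa_def rename_states_def inj_eq)

lemma card_states_rename_states: "finite (states M) \<Longrightarrow> card (states (rename_states f M)) \<le> card (states M)"
  by (simp add: rename_states_def card_image_le)

section \<open>The lifting automaton\<close>

datatype state = Start | St nat | Mid nat nat

instance state :: countable by countable_datatype

definition lifting_states :: "(nat, nat) nfa \<Rightarrow> state set" where
  "lifting_states M = insert Start (St ` states M \<union> (\<lambda>(p, a). Mid p a) ` (states M \<times> alphabet M))"

text \<open>In \<open>Mid p a\<close> the letter \<open>a\<close> has been read in state \<open>p\<close> and the next letter must name
  a successor. The odd letters of \<open>G\<close> name the states of both automata of the pair, so the
  skipping loops in \<open>St p\<close> also absorb letters that are meaningful only to the other one.\<close>

definition lifting_trans :: "(nat, nat) nfa \<Rightarrow> nat set \<Rightarrow> (state \<times> nat \<times> state) set" where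
  "lifting_trans M G =
     {(Start, 2 * p + 1, St p) | p. p \<in> init M} \<union>
     {(St p, 2 * a, Mid p a) | p a. p \<in> states M \<and> a \<in> alphabet M} \<union>
     {(St p, x, St p) | p x. p \<in> states M \<and> x \<in> G \<and> odd x} \<union>
     {(Mid p a, 2 * q + 1, St q) | p a q. (p, a, q) \<in> trans M}"

definition lifting_dfa :: "(nat, nat) nfa \<Rightarrow> nat set \<Rightarrow> (state, nat) nfa" where
  "lifting_dfa M G = \<lparr>states = lifting_states M, alphabet = G, trans = lifting_trans M G,
     init = {Start}, final = St ` final M\<rparr>"

lemma card_lifting_states:
  assumes "finite (states M)" "finite (alphabet M)"
  shows "card (lifting_states M) \<le> 1 + card (states M) + card (states M) * card (alphabet M)"
proof -
  let ?Mid = "(\<lambda>(p, a). Mid p a) ` (states M \<times> alphabet M)"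
  have "card (lifting_states M) \<le> Suc (card (St ` states M \<union> ?Mid))"
    unfolding lifting_states_def using assms by (simp add: card_insert_if)
  also have "\<dots> \<le> Suc (card (St ` states M) + card ?Mid)"
    using card_Un_le by simp
  also have "\<dots> \<le> Suc (card (states M) + card (states M \<times> alphabet M))"
    using assms by (intro Suc_le_mono[THEN iffD2] add_mono card_image_le) auto
  finally show ?thesis by (simp add: card_cartesian_product)
qed

locale lifting_alphabet =
  fixes M :: "(nat, nat) nfa" and G :: "nat set"
  assumes wf: "wf_nfa M" and finite_G: "finite G"
    and letters_in_G: "a \<in> alphabet M \<Longrightarrow> 2 * a \<in> G"
    and states_in_G: "q \<in> states M \<Longrightarrow> 2 * q + 1 \<in> G"
    and even_in_G: "x \<in> G \<Longrightarrow> even x \<Longrightarrow> x div 2 \<in> alphabet M"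
begin

lemma wf_nfa_lifting_dfa: "wf_nfa (lifting_dfa M G)"
  using wf letters_in_G states_in_G finite_G
  by (auto simp: wf_nfa_def lifting_dfa_def lifting_states_def lifting_trans_def)

lemma is_dfa_lifting_dfa: "is_dfa (lifting_dfa M G)"
  using wf_nfa_lifting_dfa by (auto simp: is_dfa_def lifting_dfa_def lifting_trans_def)

lemma reach_lifting_sound:
  "reach (lifting_trans M G) s w (St q) \<Longrightarrow> (case s of
      Start \<Rightarrow> \<exists>p\<in>init M. reach (trans M) p (decode w) q
    | St p \<Rightarrow> reach (trans M) p (decode w) q
    | Mid p a \<Rightarrow> \<exists>p'. (p, a, p') \<in> trans M \<and> reach (trans M) p' (decode w) q)"
proof (induction w arbitrary: s)
  case Nil
  then show ?case by (cases s) auto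
next
  case (Cons x w)
  then obtain s' where step: "(s, x, s') \<in> lifting_trans M G"
    and "reach (lifting_trans M G) s' w (St q)" by auto
  then have "case s' of
      Start \<Rightarrow> \<exists>p\<in>init M. reach (trans M) p (decode w) q
    | St p \<Rightarrow> reach (trans M) p (decode w) q
    | Mid p a \<Rightarrow> \<exists>p'. (p, a, p') \<in> trans M \<and> reach (trans M) p' (decode w) q"
    using Cons.IH by blast
  with step show ?case by (auto simp: lifting_trans_def)
qed

lemma lang_lifting_dfa_sound: "w \<in> lang (lifting_dfa M G) \<Longrightarrow> decode w \<in> lang M"
  using reach_lifting_sound[where s = Start] even_in_G
  by (fastforce simp: lang_def lifting_dfa_def decode_def)

lemma reach_St_odd:
  "\<forall>x\<in>set S. odd x \<Longrightarrow> set S \<subseteq> G \<Longrightarrow> p \<in> states M \<Longrightarrow> reach (lifting_trans M G) (St p) S (St p)"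
  by (induction S) (auto simp: lifting_trans_def)

lemma reach_St_trans:
  assumes "(p, b, p') \<in> trans M"
  shows "reach (lifting_trans M G) (St p) [2 * b, 2 * p' + 1] (St p')"
  using assms wf by (auto simp: lifting_trans_def wf_nfa_def)

lemma reach_St_extend:
  "reach (trans M) p v q \<Longrightarrow> p \<in> states M \<Longrightarrow> set u \<subseteq> G \<Longrightarrow> subseq (decode u) v \<Longrightarrow>
   \<exists>v'. reach (lifting_trans M G) (St p) v' (St q) \<and> subseq u v' \<and> decode v' = v"
proof (induction v arbitrary: p u)
  case Nil
  have "decode u = []" using Nil.prems(4) by (rule list_emb_Nil2)
  then have "\<forall>x\<in>set u. odd x" by (simp add: decode_Nil_iff)
  moreover have "p = q" using Nil.prems(1) by simp
  ultimately have "reach (lifting_trans M G) (St p) u (St q)"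
    using reach_St_odd Nil.prems(2,3) by blast
  then show ?case using \<open>decode u = []\<close> by blast
next
  case (Cons b v)
  obtain p' where p': "(p, b, p') \<in> trans M" "reach (trans M) p' v q"
    using Cons.prems(1) by auto
  then have "p' \<in> states M" using wf by (auto simp: wf_nfa_def)
  obtain S r where S: "subseq u (S @ 2 * b # r)" "\<forall>x\<in>set S. odd x"
    and S_u: "set S \<subseteq> set u" and r_u: "set r \<subseteq> set u" and r: "subseq (decode r) v"
    by (rule subseq_decode_Cons[OF Cons.prems(4)])
  have "set S \<subseteq> G" "set r \<subseteq> G" using S_u r_u Cons.prems(3) by auto
  obtain v1 where v1: "reach (lifting_trans M G) (St p') v1 (St q)" "subseq r v1" "decode v1 = v"
    using Cons.IH[OF p'(2) \<open>p' \<in> states M\<close> \<open>set r \<subseteq> G\<close> r] by blast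
  define v' where "v' = S @ [2 * b, 2 * p' + 1] @ v1"
  have "reach (lifting_trans M G) (St p) v' (St q)"
    using reach_St_odd[OF S(2) \<open>set S \<subseteq> G\<close> Cons.prems(2)] reach_St_trans[OF p'(1)] v1(1)
    unfolding v'_def reach_append by blast
  moreover have "subseq u v'"
  proof (rule subseq_order.trans[OF S(1)])
    show "subseq (S @ 2 * b # r) v'" using v1(2) by (simp add: v'_def subseq_append' list_emb_Cons)
  qed
  moreover have "decode v' = b # v"
    using S(2) v1(3) by (simp add: v'_def decode_Nil_iff[THEN iffD2])
  ultimately show ?case by blast
qed

lemma lang_lifting_dfa_extend:
  assumes "v \<in> lang M" "set u \<subseteq> G" "subseq (decode u) v"
  shows "\<exists>v'\<in>lang (lifting_dfa M G). subseq u v' \<and> decode v' = v"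
proof -
  obtain p q where p: "p \<in> init M" and q: "q \<in> final M" and run: "reach (trans M) p v q"
    using assms(1) by (auto simp: lang_def)
  then have "p \<in> states M" using wf by (auto simp: wf_nfa_def)
  then obtain v1 where v1: "reach (lifting_trans M G) (St p) v1 (St q)" "subseq u v1" "decode v1 = v"
    using reach_St_extend[OF run _ assms(2,3)] by blast
  define v' where "v' = (2 * p + 1) # v1"
  have "(Start, 2 * p + 1, St p) \<in> lifting_trans M G" using p by (simp add: lifting_trans_def)
  then have run': "reach (lifting_trans M G) Start v' (St q)" using v1(1) by (auto simp: v'_def)
  have "lifting_trans M G \<subseteq> UNIV \<times> G \<times> UNIV"
    using wf_nfa_lifting_dfa by (auto simp: wf_nfa_def lifting_dfa_def)
  then have "set v' \<subseteq> G" by (rule reach_letters[OF run'])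
  then have "v' \<in> lang (lifting_dfa M G)"
    using q run' by (auto simp: lang_def lifting_dfa_def)
  moreover have "subseq u v'" "decode v' = v" using v1 by (auto simp: v'_def)
  ultimately show ?thesis by blast
qed

lemma decode_lifting_lifting_dfa: "decode_lifting G (lang (lifting_dfa M G)) (lang M)"
proof -
  have "lang (lifting_dfa M G) \<subseteq> lists G" by (auto simp: lang_def lifting_dfa_def)
  then show ?thesis using lang_lifting_dfa_sound lang_lifting_dfa_extend
    by (auto simp: decode_lifting_def lists_eq_set)
qed

lemma ex_nat_lifting_dfa:
  obtains M' :: "(nat, nat) nfa" where "is_dfa M'" "alphabet M' = G"
    "card (states M') \<le> 1 + card (states M) + card (states M) * card (alphabet M)"
    "decode_lifting G (lang M') (lang M)"
proof
  let ?M' = "rename_states (to_nat :: state \<Rightarrow> nat) (lifting_dfa M G)"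
  show "is_dfa ?M'" by (rule is_dfa_rename_states[OF inj_to_nat is_dfa_lifting_dfa])
  show "alphabet ?M' = G" by (simp add: rename_states_def lifting_dfa_def)
  have "finite (states (lifting_dfa M G))" using wf_nfa_lifting_dfa by (simp add: wf_nfa_def)
  then have "card (states ?M') \<le> card (lifting_states M)"
    using card_states_rename_states by (fastforce simp: lifting_dfa_def)
  also have "\<dots> \<le> 1 + card (states M) + card (states M) * card (alphabet M)"
    using wf by (intro card_lifting_states) (auto simp: wf_nfa_def)
  finally show "card (states ?M') \<le> 1 + card (states M) + card (states M) * card (alphabet M)" .
  show "decode_lifting G (lang ?M') (lang M)"
    using decode_lifting_lifting_dfa by (simp add: lang_rename_states[OF inj_to_nat])
qed

end

section \<open>Reduction to DFAs\<close>

definition tower_letters :: "nat set \<Rightarrow> nat set \<Rightarrow> nat set" where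
  "tower_letters \<Sigma> Q = (\<lambda>a. 2 * a) ` \<Sigma> \<union> (\<lambda>q. 2 * q + 1) ` Q"

lemma card_tower_letters:
  assumes "finite \<Sigma>" "finite Q" "finite Q'"
  shows "card (tower_letters \<Sigma> (Q \<union> Q')) \<le> card \<Sigma> + card Q + card Q'"
proof -
  have "card (tower_letters \<Sigma> (Q \<union> Q')) \<le> card \<Sigma> + card (Q \<union> Q')"
    unfolding tower_letters_def
    by (rule order_trans[OF card_Un_le add_mono[OF card_image_le card_image_le]]) (use assms in auto)
  then show ?thesis using card_Un_le[of Q Q'] by linarith
qed

lemma lifting_alphabet_tower_letters:
  assumes "wf_nfa M" "states M \<subseteq> Q" "finite Q"
  shows "lifting_alphabet M (tower_letters (alphabet M) Q)"
  using assms by unfold_locales (auto simp: tower_letters_def wf_nfa_def)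

lemma ex_dfas_preserving_towers:
  fixes A B :: "(nat, nat) nfa"
  assumes wf: "wf_nfa A" "wf_nfa B" and \<Sigma>: "alphabet A = alphabet B"
  obtains A' B' :: "(nat, nat) nfa" where "is_dfa A'" "is_dfa B'" "alphabet A' = alphabet B'"
    "card (alphabet A') \<le> card (alphabet A) + card (states A) + card (states B)"
    "card (states A') \<le> 1 + card (states A) + card (states A) * card (alphabet A)"
    "card (states B') \<le> 1 + card (states B) + card (states B) * card (alphabet A)"
    "\<And>r. (\<exists>ws. is_tower (lang A) (lang B) ws \<and> length ws = r) \<longleftrightarrow>
          (\<exists>ws. is_tower (lang A') (lang B') ws \<and> length ws = r)"
    "(\<exists>w. is_infinite_tower (lang A) (lang B) w) \<longleftrightarrow> (\<exists>w. is_infinite_tower (lang A') (lang B') w)"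
proof -
  define G where "G = tower_letters (alphabet A) (states A \<union> states B)"
  have fin: "finite (alphabet A)" "finite (states A)" "finite (states B)"
    using wf by (auto simp: wf_nfa_def)
  have "lifting_alphabet A G" "lifting_alphabet B G"
    using lifting_alphabet_tower_letters[OF wf(1)] lifting_alphabet_tower_letters[OF wf(2)] fin
    by (auto simp: G_def \<Sigma>)
  then obtain A' B' :: "(nat, nat) nfa" where
      A': "is_dfa A'" "alphabet A' = G"
      "card (states A') \<le> 1 + card (states A) + card (states A) * card (alphabet A)"
      "decode_lifting G (lang A') (lang A)"
    and B': "is_dfa B'" "alphabet B' = G"
      "card (states B') \<le> 1 + card (states B) + card (states B) * card (alphabet B)"
      "decode_lifting G (lang B') (lang B)"
    by (metis lifting_alphabet.ex_nat_lifting_dfa)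
  show thesis
  proof (rule that[OF A'(1) B'(1)])
    show "card (alphabet A') \<le> card (alphabet A) + card (states A) + card (states B)"
      using card_tower_letters[OF fin] by (simp add: A'(2) G_def)
  qed (use A' B' \<Sigma> ex_tower_iff_decode_lifting[OF A'(4) B'(4)]
         ex_infinite_tower_iff_decode_lifting[OF A'(4) B'(4)] in simp_all)
qed

lemma tower_size_bounds:
  fixes m n q :: nat
  assumes "1 \<le> m" "1 \<le> n" "q \<le> n"
  shows "1 + q + q * m \<le> 3 * m * n" and "m + 2 * n \<le> 3 * m * n"
proof -
  have "q * m \<le> n * m" using assms(3) by (rule mult_le_mono1)
  moreover have "n \<le> n * m" "m \<le> n * m" using assms(1,2) by simp_all
  moreover have "3 * m * n = n * m + n * m + n * m" by simp
  ultimately show "1 + q + q * m \<le> 3 * m * n" and "m + 2 * n \<le> 3 * m * n" using assms by linarith+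
qed

theorem theorem12:
  shows "\<exists>C::nat. \<forall>(n::nat) (m::nat) (A::(nat, nat) nfa) (B::(nat, nat) nfa).
    n \<ge> 1 \<and> m \<ge> 1 \<and> wf_nfa A \<and> wf_nfa B \<and>
    alphabet A = alphabet B \<and> card (alphabet A) = m \<and>
    card (states A) \<le> n \<and> card (states B) \<le> n \<longrightarrow>
    (\<exists>(A'::(nat, nat) nfa) (B'::(nat, nat) nfa).
       is_dfa A' \<and> is_dfa B' \<and>
       card (states A') \<le> C * m * n \<and> card (states B') \<le> C * m * n \<and>
       alphabet A' = alphabet B' \<and> card (alphabet A') \<le> C * m * n \<and>
       (\<forall>r \<ge> 1. (\<exists>ws. is_tower (lang A) (lang B) ws \<and> length ws = r) \<longleftrightarrow>
                 (\<exists>ws. is_tower (lang A') (lang B') ws \<and> length ws = r)) \<and>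
       ((\<exists>w. is_infinite_tower (lang A) (lang B) w) \<longleftrightarrow>
        (\<exists>w. is_infinite_tower (lang A') (lang B') w)))"
proof (intro exI[of _ 3] allI impI, elim conjE)
  fix n m :: nat and A B :: "(nat, nat) nfa"
  assume n: "n \<ge> 1" and m: "m \<ge> 1" and wf: "wf_nfa A" "wf_nfa B" and \<Sigma>: "alphabet A = alphabet B"
    and card_\<Sigma>: "card (alphabet A) = m" and card_Q: "card (states A) \<le> n" "card (states B) \<le> n"
  obtain A' B' :: "(nat, nat) nfa" where dfa: "is_dfa A'" "is_dfa B'" "alphabet A' = alphabet B'"
    and bounds: "card (alphabet A') \<le> m + card (states A) + card (states B)"
      "card (states A') \<le> 1 + card (states A) + card (states A) * m"
      "card (states B') \<le> 1 + card (states B) + card (states B) * m"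
    and towers: "\<And>r. (\<exists>ws. is_tower (lang A) (lang B) ws \<and> length ws = r) \<longleftrightarrow>
          (\<exists>ws. is_tower (lang A') (lang B') ws \<and> length ws = r)"
      "(\<exists>w. is_infinite_tower (lang A) (lang B) w) \<longleftrightarrow> (\<exists>w. is_infinite_tower (lang A') (lang B') w)"
    using ex_dfas_preserving_towers[OF wf \<Sigma>] unfolding card_\<Sigma> by blast
  have "card (alphabet A') \<le> 3 * m * n" "card (states A') \<le> 3 * m * n" "card (states B') \<le> 3 * m * n"
    using bounds tower_size_bounds[OF m n card_Q(1)] tower_size_bounds(1)[OF m n card_Q(2)] card_Q
    by linarith+
  then show "\<exists>(A'::(nat, nat) nfa) (B'::(nat, nat) nfa). is_dfa A' \<and> is_dfa B' \<and>
       card (states A') \<le> 3 * m * n \<and> card (states B') \<le> 3 * m * n \<and>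
       alphabet A' = alphabet B' \<and> card (alphabet A') \<le> 3 * m * n \<and>
       (\<forall>r \<ge> 1. (\<exists>ws. is_tower (lang A) (lang B) ws \<and> length ws = r) \<longleftrightarrow>
                 (\<exists>ws. is_tower (lang A') (lang B') ws \<and> length ws = r)) \<and>
       ((\<exists>w. is_infinite_tower (lang A) (lang B) w) \<longleftrightarrow>
        (\<exists>w. is_infinite_tower (lang A') (lang B') w))"
    using dfa towers by blast
qed

end
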